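(* Let $Q:(-\infty,-1)\to(-\infty,0)$ be the inverse of the strictly increasing function $G\mapsto G-e^G$ on $(-\infty,0)$, and define $R:\mathbb{R}\to\mathbb{R}$ by $R(V)=-2(1-e^{Q(V)})^2$ for $V<-1$ and $R(V)=4(V+1)$ for $V\ge -1$. Then, up to translations $s\mapsto s+s_0$, the two-point boundary value problem $$V''-3V'=R(V),\ s\in(-\infty,\infty),\qquad V(-\infty)=-1,\quad V(\infty)=-\infty$$ has a unique solution; that is, if $V_1,V_2$ are two solutions, there exists $s_0\in\mathbb{R}$ with $V_1(s)=V_2(s+s_0)$ for all $s$.
   Context: Here prime denotes $d/ds$, and $V(-\infty)$, $V(\infty)$ denote the limits as $s\to-\infty$, $s\to\infty$. *)

theory Defs
  imports "HOL-Analysis.Analysis"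
begin

definition Q :: "real \<Rightarrow> real" where
  "Q V = (THE G. G < 0 \<and> G - exp G = V)"

definition R :: "real \<Rightarrow> real" where
  "R V = (if V < -1 then -2 * (1 - exp (Q V))^2 else 4 * (V + 1))"

definition is_bvp_solution :: "(real \<Rightarrow> real) \<Rightarrow> bool" where
  "is_bvp_solution V \<longleftrightarrow>
     (\<exists>V1 V2. (\<forall>s. (V has_real_derivative V1 s) (at s)
                  \<and> (V1 has_real_derivative V2 s) (at s)
                  \<and> V2 s - 3 * V1 s = R (V s)))
     \<and> (V \<longlongrightarrow> -1) at_bot
     \<and> filterlim V at_bot at_top"

end

theory Submission
  imports Defs "HOL-Complex_Analysis.Conformal_Mappings"
begin

text \<open>Along a solution V decreases strictly from -1 to -\<infinity>, so its slope can be read as a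
  function of the depth z = -1 - V: the phase profile P z = - V' satisfies
  P' = 3 + r z / P with P (0+) = 0, where r z = - R (-1 - z) \<ge> 0. Because r \<ge> 0, two profiles
  cannot separate, so all solutions share one profile and differ only by a translation.
  For existence, the energy E = P^2 / 2 solves E z = \<integral> (3 sqrt (2 E) + r) over [0, z], a
  fixed-point problem for a monotone operator, solved by the infimum of its supersolutions below 8 z^2;
  integrating ds = dz / P then recovers V.\<close>

section \<open>The inverse Q and the nonlinearity R\<close>

lemma diff_exp_strict_mono:
  assumes "G1 < G2" "G2 \<le> 0"
  shows "G1 - exp G1 < G2 - exp (G2::real)"
proof -
  have "exp x < 1" if "x < G2" for x
    using that assms by simp
  then show ?thesis
    using assms(1) by (intro DERIV_pos_imp_increasing_open[where f="\<lambda>G. G - exp G"])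
      (auto intro!: derivative_eq_intros continuous_intros)
qed

lemma Q_eqI:
  assumes "G < 0" "G - exp G = V"
  shows "Q V = G"
  unfolding Q_def
proof (rule the_equality)
  show "G' = G" if "G' < 0 \<and> G' - exp G' = V" for G'
    using that assms diff_exp_strict_mono[of G G'] diff_exp_strict_mono[of G' G]
    by (cases G G' rule: linorder_cases) auto
qed (use assms in simp)

lemma Q_bounds:
  assumes "V < -1"
  shows "Q V < 0" and "Q V - exp (Q V) = V"
proof -
  have "V - exp V \<le> V" "V \<le> 0 - exp 0"
    using assms by simp_all
  then obtain G where G: "V \<le> G" "G \<le> 0" "G - exp G = V"
    using IVT[of "\<lambda>G. G - exp G" V V 0] assms by (auto intro!: continuous_intros)
  with assms have "G < 0"
    by (cases "G = 0") auto
  with G Q_eqI show "Q V < 0" "Q V - exp (Q V) = V"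
    by auto
qed

lemma isCont_Q:
  assumes "V < -1"
  shows "isCont Q V"
proof -
  define G where "G = Q V"
  have G: "G < 0" "G - exp G = V"
    using Q_bounds[OF assms] G_def by auto
  have "isCont Q (G - exp G)"
    by (rule isCont_inverse_function[where d="-G/2"])
      (use G in \<open>auto intro!: Q_eqI continuous_intros\<close>)
  with G show ?thesis
    by simp
qed

lemma R_neg: "V < -1 \<Longrightarrow> R V < 0"
  unfolding R_def using Q_bounds[of V] by simp

lemma R_nonpos: "V \<le> -1 \<Longrightarrow> R V \<le> 0"
  using R_neg[of V] unfolding R_def by (cases "V < -1") auto

lemma R_pos: "V > -1 \<Longrightarrow> R V > 0"
  unfolding R_def by simp

lemma R_ge_linear:
  assumes "V \<le> -1"
  shows "4 * (V + 1) \<le> R V"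
proof (cases "V < -1")
  case True
  define k :: "real \<Rightarrow> real" where "k G = 2 * (1 - exp G)^2 + 4 * (G - exp G + 1)" for G
  have k_deriv: "(k has_real_derivative 4 * (1 - exp x)^2) (at x)" for x
  proof -
    have "(k has_real_derivative 2 * (2 * (1 - exp x) * (- exp x)) + 4 * (1 - exp x)) (at x)"
      unfolding k_def by (auto intro!: derivative_eq_intros)
    moreover have "2 * (2 * (1 - exp x) * (- exp x)) + 4 * (1 - exp x) = 4 * (1 - exp x)^2"
      by (simp add: algebra_simps power2_eq_square)
    ultimately show ?thesis
      by simp
  qed
  have "k (Q V) \<le> k 0"
  proof (rule DERIV_nonneg_imp_nondecreasing[of "Q V" 0 k])
    show "Q V \<le> 0"
      using Q_bounds(1)[OF True] by simp
    show "\<exists>y. (k has_real_derivative y) (at x) \<and> 0 \<le> y" for x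
      using k_deriv[of x] by (intro exI[of _ "4 * (1 - exp x)^2"]) simp
  qed
  moreover have "k (Q V) = 4 * (V + 1) - R V" "k 0 = 0"
    using Q_bounds(2)[OF True] True by (simp_all add: k_def R_def)
  ultimately show ?thesis
    by simp
qed (simp add: R_def)

lemma abs_R_le: "\<bar>R V\<bar> \<le> 4 * \<bar>V + 1\<bar>"
  using R_ge_linear[of V] R_nonpos[of V] by (cases "V \<le> -1") (auto simp: R_def)

lemma isCont_R: "isCont R V"
proof -
  consider "V < -1" | "V = -1" | "V > -1"
    by linarith
  then show ?thesis
  proof cases
    case 1
    have "\<forall>\<^sub>F x in nhds V. R x = -2 * (1 - exp (Q x))^2"
      using eventually_nhds_in_open[of "{..<-1}" V] 1
      by (auto elim!: eventually_mono simp: R_def)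
    moreover have "isCont (\<lambda>x. -2 * (1 - exp (Q x))^2) V"
      using isCont_Q[OF 1] by (auto intro!: continuous_intros)
    ultimately show ?thesis
      using isCont_cong by metis
  next
    case 2
    have "((\<lambda>x. 4 * \<bar>x + 1\<bar>) \<longlongrightarrow> 4 * \<bar>V + 1\<bar>) (at V)"
      by (intro tendsto_intros)
    with 2 have "(R \<longlongrightarrow> 0) (at V)"
      by (intro Lim_null_comparison[of R "\<lambda>x. 4 * \<bar>x + 1\<bar>"]) (auto simp: abs_R_le)
    with 2 show ?thesis
      by (simp add: isCont_def R_def)
  next
    case 3
    have "\<forall>\<^sub>F x in nhds V. R x = 4 * (x + 1)"
      using eventually_nhds_in_open[of "{-1<..}" V] 3
      by (auto elim!: eventually_mono simp: R_def)
    moreover have "isCont (\<lambda>x. 4 * (x + 1)) V"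
      by (auto intro!: continuous_intros)
    ultimately show ?thesis
      using isCont_cong by metis
  qed
qed

section \<open>Phase profiles\<close>

definition r :: "real \<Rightarrow> real" where
  "r z = - R (-1 - z)"

lemma r_nonneg: "z \<ge> 0 \<Longrightarrow> r z \<ge> 0"
  unfolding r_def using R_nonpos[of "-1 - z"] by simp

lemma r_pos: "z > 0 \<Longrightarrow> r z > 0"
  unfolding r_def using R_neg[of "-1 - z"] by simp

lemma r_le_linear: "z \<ge> 0 \<Longrightarrow> r z \<le> 4 * z"
  unfolding r_def using R_ge_linear[of "-1 - z"] by simp

lemma continuous_on_r: "continuous_on S r"
  unfolding r_def
  by (intro continuous_at_imp_continuous_on ballI continuous_intros isCont_o2[OF _ isCont_R])

text \<open>For a solution V, P z = - V' s at the time s where V s = -1 - z.\<close>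
definition phase_profile :: "(real \<Rightarrow> real) \<Rightarrow> bool" where
  "phase_profile P \<longleftrightarrow>
     (\<forall>z>0. 0 < P z \<and> (P has_real_derivative 3 + r z / P z) (at z)) \<and> (P \<longlongrightarrow> 0) (at_right 0)"

text \<open>Since r \<ge> 0, the vector field P \<mapsto> 3 + r z / P is nonincreasing, so the distance
  between two profiles can only shrink as z grows; it vanishes at z = 0.\<close>
lemma phase_profile_unique:
  assumes Pa: "phase_profile Pa" and Pb: "phase_profile Pb" and "z > 0"
  shows "Pa z = Pb z"
proof -
  define g where "g w = (Pa w - Pb w)^2" for w
  have g_deriv: "(g has_real_derivative - (2 * r w * (Pa w - Pb w)^2 / (Pa w * Pb w))) (at w)"
    if "w > 0" for w
  proof -
    have pos: "Pa w > 0" "Pb w > 0"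
      and "(g has_real_derivative 2 * (Pa w - Pb w) * ((3 + r w / Pa w) - (3 + r w / Pb w))) (at w)"
      using Pa Pb that unfolding phase_profile_def g_def by (auto intro!: derivative_eq_intros)
    moreover have "2 * (Pa w - Pb w) * ((3 + r w / Pa w) - (3 + r w / Pb w))
        = - (2 * r w * (Pa w - Pb w)^2 / (Pa w * Pb w))"
      using pos by (simp add: field_simps power2_eq_square)
    ultimately show ?thesis
      by simp
  qed
  have g_antimono: "g z \<le> g w" if "0 < w" "w \<le> z" for w
  proof (rule DERIV_nonpos_imp_nonincreasing[of w z g])
    fix x assume "w \<le> x" "x \<le> z"
    with that have "x > 0" "Pa x > 0" "Pb x > 0"
      using Pa Pb unfolding phase_profile_def by auto
    then show "\<exists>y. (g has_real_derivative y) (at x) \<and> y \<le> 0"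
      using g_deriv[of x] r_nonneg[of x] by (intro exI[of _ "- (2 * r x * (Pa x - Pb x)^2 / (Pa x * Pb x))"]) simp
  qed (use that in simp)
  have "(g \<longlongrightarrow> (0 - 0)^2) (at_right 0)"
    using Pa Pb unfolding phase_profile_def g_def by (intro tendsto_intros) auto
  moreover have "\<forall>\<^sub>F w in at_right 0. g z \<le> g w"
    using eventually_at_right_real[OF \<open>z > 0\<close>] by eventually_elim (auto intro: g_antimono)
  ultimately have "g z \<le> 0"
    by (intro tendsto_lowerbound) auto
  then show ?thesis
    unfolding g_def by simp
qed

section \<open>Uniqueness up to translation\<close>

locale bvp_solution =
  fixes V V' V'' :: "real \<Rightarrow> real"
  assumes V_deriv: "\<And>s. (V has_real_derivative V' s) (at s)"
    and V'_deriv: "\<And>s. (V' has_real_derivative V'' s) (at s)"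
    and ode: "\<And>s. V'' s - 3 * V' s = R (V s)"
    and V_at_bot: "(V \<longlongrightarrow> -1) at_bot"
    and V_at_top: "filterlim V at_bot at_top"
begin

lemma continuous_on_V: "continuous_on S V"
  using V_deriv by (blast intro: continuous_at_imp_continuous_on DERIV_isCont)

text \<open>At a global maximum above -1 we would have V' = 0 and V'' = R V > 0.\<close>
lemma V_le_neg_one: "V s \<le> -1"
proof (rule ccontr)
  assume "\<not> V s \<le> -1"
  then have "V s > -1" by simp
  then obtain A where A: "\<And>t. t \<le> A \<Longrightarrow> V t < V s"
    using order_tendstoD(2)[OF V_at_bot] by (auto simp: eventually_at_bot_linorder)
  obtain B where B: "\<And>t. t \<ge> B \<Longrightarrow> V t < V s"
    using V_at_top by (auto simp: filterlim_at_bot_dense eventually_at_top_linorder)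
  have "A < s" "s < B"
    using A[of s] B[of s] by force+
  then obtain m where m: "m \<in> {A..B}" "\<And>t. t \<in> {A..B} \<Longrightarrow> V t \<le> V m"
    using continuous_attains_sup[of "{A..B}" V] continuous_on_V by auto
  have "V s \<le> V m"
    using m(2) \<open>A < s\<close> \<open>s < B\<close> by simp
  have max: "V t \<le> V m" for t
    using m(2)[of t] A[of t] B[of t] \<open>V s \<le> V m\<close> by (cases "t \<le> A"; cases "t \<ge> B") auto
  have "V' m = 0"
    using DERIV_local_max[OF V_deriv[of m], of 1] max by auto
  moreover have "V'' m > 0"
    using ode[of m] R_pos[of "V m"] \<open>V s > -1\<close> \<open>V s \<le> V m\<close> \<open>V' m = 0\<close> by simp
  ultimately obtain d where "d > 0" and d: "\<And>h. 0 < h \<Longrightarrow> h < d \<Longrightarrow> 0 < V' (m + h)"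
    using DERIV_pos_inc_right[OF V'_deriv[of m]] by auto
  have "V m < V (m + d)"
  proof (rule DERIV_pos_imp_increasing_open[of m "m + d" V])
    fix x assume "m < x" "x < m + d"
    then show "\<exists>y. (V has_real_derivative y) (at x) \<and> 0 < y"
      using V_deriv[of x] d[of "x - m"] by auto
  qed (use \<open>d > 0\<close> continuous_on_V in auto)
  with max show False
    using not_le by blast
qed

lemma weighted_slope_deriv:
  "((\<lambda>s. exp (-3 * s) * V' s) has_real_derivative exp (-3 * s) * R (V s)) (at s)"
proof -
  have "((\<lambda>s. exp (-3 * s) * V' s) has_real_derivative
      exp (-3 * s) * (-3) * V' s + exp (-3 * s) * V'' s) (at s)"
    by (auto intro!: derivative_eq_intros V'_deriv)
  then show ?thesis
    using ode[of s] by (simp add: algebra_simps)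
qed

lemma weighted_slope_antimono:
  assumes "s \<le> t"
  shows "exp (-3 * t) * V' t \<le> exp (-3 * s) * V' s"
proof (rule DERIV_nonpos_imp_nonincreasing[OF assms])
  fix x
  have "exp (-3 * x) * R (V x) \<le> 0"
    using R_nonpos[OF V_le_neg_one] by (simp add: mult_le_0_iff)
  then show "\<exists>y. ((\<lambda>s. exp (-3 * s) * V' s) has_real_derivative y) (at x) \<and> y \<le> 0"
    using weighted_slope_deriv by blast
qed

lemma V'_nonneg_before:
  assumes "V' s \<ge> 0" "t \<le> s"
  shows "V' t \<ge> 0"
  using weighted_slope_antimono[OF assms(2)] assms(1)
  by (smt (verit, best) exp_gt_zero mult_nonneg_nonneg zero_le_mult_iff)

lemma V'_nonpos: "V' s \<le> 0"
proof (rule ccontr)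
  assume "\<not> V' s \<le> 0"
  then have "exp (-3 * s) * V' s > 0" by simp
  then have pos: "V' t > 0" if "t \<le> s" for t
    using weighted_slope_antimono[OF that] by (smt (verit) exp_gt_zero mult_pos_pos zero_less_mult_iff)
  have "V t \<le> V (s - 1)" if "t \<le> s - 1" for t
    using that pos by (intro DERIV_nonneg_imp_nondecreasing[of t "s - 1" V])
      (auto intro!: exI less_imp_le V_deriv)
  then have "-1 \<le> V (s - 1)"
    by (intro tendsto_upperbound[OF V_at_bot]) (auto simp: eventually_at_bot_linorder)
  moreover have "V (s - 1) < V s"
    using pos by (intro DERIV_pos_imp_increasing[of "s - 1" s V]) (auto intro!: V_deriv)
  ultimately show False
    using V_le_neg_one[of s] by simp
qed


lemma V_eq_neg_one_if_critical:
  assumes "V' s = 0"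
  shows "V s = -1"
proof -
  have "(V has_real_derivative 0) (at x)" if "x \<le> s" for x
    using V'_nonneg_before[OF _ that] V'_nonpos[of x] assms V_deriv[of x] by fastforce
  then have "\<exists>c. \<forall>t\<in>{..s}. V t = c"
    by (intro has_field_derivative_zero_constant) (auto intro: has_field_derivative_at_within)
  then have "(V \<longlongrightarrow> V s) at_bot"
    by (intro tendsto_eventually) (force simp: eventually_at_bot_linorder)
  then show ?thesis
    using tendsto_unique[OF _ _ V_at_bot] by simp
qed

text \<open>R V \<ge> 4 (V + 1) makes exp (-4 s) (-1 - V s - V' s) nonincreasing.\<close>
lemma V_eq_neg_one_after:
  assumes "V s = -1" "V' s = 0" "s \<le> t"
  shows "V t = -1"
proof -
  define h where "h x = exp (-4 * x) * (-1 - V x - V' x)" for x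
  have h_deriv: "(h has_real_derivative exp (-4 * x) * (4 * (V x + 1) - R (V x))) (at x)" for x
  proof -
    have "(h has_real_derivative
        exp (-4 * x) * (-4) * (-1 - V x - V' x) + exp (-4 * x) * (- V' x - V'' x)) (at x)"
      unfolding h_def by (auto intro!: derivative_eq_intros V_deriv V'_deriv)
    then show ?thesis
      using ode[of x] by (simp add: algebra_simps)
  qed
  have "h t \<le> h s"
  proof (rule DERIV_nonpos_imp_nonincreasing[of s t h])
    fix x
    have "exp (-4 * x) * (4 * (V x + 1) - R (V x)) \<le> 0"
      using R_ge_linear[OF V_le_neg_one] by (simp add: mult_le_0_iff)
    then show "\<exists>y. (h has_real_derivative y) (at x) \<and> y \<le> 0"
      using h_deriv by blast
  qed (use assms in simp)
  then have "-1 - V t - V' t \<le> 0"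
    using assms unfolding h_def by (simp add: mult_le_0_iff)
  then show ?thesis
    using V_le_neg_one[of t] V'_nonpos[of t] by simp
qed

lemma V'_neg: "V' s < 0"
proof (rule ccontr)
  assume "\<not> V' s < 0"
  then have "V' s = 0"
    using V'_nonpos[of s] by simp
  then have "V t = -1" if "t \<ge> s" for t
    using V_eq_neg_one_after V_eq_neg_one_if_critical that by blast
  moreover obtain N where "\<And>t. t \<ge> N \<Longrightarrow> V t < -2"
    using V_at_top by (auto simp: filterlim_at_bot_dense eventually_at_top_linorder)
  ultimately show False
    using max.cobounded1[of N s] max.cobounded2[of s N] by fastforce
qed

lemma V_strict_antimono: "x < y \<Longrightarrow> V y < V x"
  using DERIV_neg_imp_decreasing[of x y V] V_deriv V'_neg by blast

lemma V_less_neg_one: "V s < -1"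
  using V_strict_antimono[of "s - 1" s] V_le_neg_one[of "s - 1"] by simp

text \<open>exp (-3 s) V' s is nonincreasing and nonpositive, hence bounded for s \<le> 0, so that
  V' s = O(exp (3 s)).\<close>
lemma V'_at_bot: "(V' \<longlongrightarrow> 0) at_bot"
proof -
  define c where "c = - V' 0"
  have "\<bar>V' s\<bar> \<le> exp (3 * s) * c" if "s \<le> 0" for s
  proof -
    have "\<bar>V' s\<bar> = exp (3 * s) * - (exp (-3 * s) * V' s)"
      using V'_nonpos[of s] by (simp add: exp_minus[symmetric] exp_add[symmetric] mult.assoc[symmetric])
    also have "\<dots> \<le> exp (3 * s) * c"
      using weighted_slope_antimono[OF that] unfolding c_def by (intro mult_left_mono) auto
    finally show ?thesis .
  qed
  moreover have "filterlim (\<lambda>s::real. 3 * s) at_bot at_bot"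
    by (rule filterlim_tendsto_pos_mult_at_bot[OF tendsto_const]) (simp_all add: filterlim_ident)
  then have "((\<lambda>s. exp (3 * s) * c) \<longlongrightarrow> 0) at_bot"
    by (intro tendsto_mult_left_zero filterlim_compose[OF exp_at_bot])
  ultimately show ?thesis
    by (intro Lim_null_comparison[of V' "\<lambda>s. exp (3 * s) * c"]) (auto simp: eventually_at_bot_linorder)
qed


definition level_time :: "real \<Rightarrow> real" where
  "level_time = inv (\<lambda>s. -1 - V s)"

lemma level_time_depth: "level_time (-1 - V s) = s"
proof -
  have "inj (\<lambda>s. -1 - V s)"
    by (rule linorder_injI) (use V_strict_antimono in force)
  then show ?thesis
    unfolding level_time_def by (rule inv_f_f)
qed

lemma V_level_time:
  assumes "z > 0"
  shows "V (level_time z) = -1 - z"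
proof -
  obtain N where N: "\<And>s. s \<le> N \<Longrightarrow> -1 - z < V s"
    using order_tendstoD(1)[OF V_at_bot, of "-1 - z"] assms by (auto simp: eventually_at_bot_linorder)
  obtain M where M: "\<And>s. s \<ge> M \<Longrightarrow> V s < -1 - z"
    using V_at_top by (auto simp: filterlim_at_bot_dense eventually_at_top_linorder)
  have "V (max N M) \<le> -1 - z" "-1 - z \<le> V (min N M)"
    using M[of "max N M"] N[of "min N M"] by auto
  then obtain s where "V s = -1 - z"
    using IVT2'[of V "max N M" "-1 - z" "min N M"] continuous_on_V by force
  then show ?thesis
    using level_time_depth[of s] by simp
qed

lemma level_time_deriv:
  assumes "z > 0"
  shows "(level_time has_real_derivative inverse (- V' (level_time z))) (at z)"
proof (rule has_field_derivative_inverse_strong_x[where S=UNIV and f="\<lambda>s. -1 - V s"])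
  show "((\<lambda>s. -1 - V s) has_real_derivative - V' (level_time z)) (at (level_time z))"
    by (auto intro!: derivative_eq_intros V_deriv)
  show "- V' (level_time z) \<noteq> 0"
    using V'_neg by (simp add: less_imp_neq)
  show "continuous_on UNIV (\<lambda>s. -1 - V s)"
    by (intro continuous_intros continuous_on_V)
  show "-1 - V (level_time z) = z"
    using V_level_time[OF assms] by simp
qed (auto simp: level_time_depth)

lemma level_time_at_right_0: "filterlim level_time at_bot (at_right 0)"
  unfolding filterlim_at_bot
proof
  fix S
  have below: "level_time z \<le> S" if "z \<in> {0<..<-1 - V S}" for z
  proof (rule ccontr)
    assume "\<not> level_time z \<le> S"
    then have "V (level_time z) < V S"
      by (intro V_strict_antimono) simp
    with that show False
      using V_level_time[of z] by simp
  qed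
  have "0 < -1 - V S"
    using V_less_neg_one[of S] by simp
  from eventually_at_right_real[OF this] show "\<forall>\<^sub>F z in at_right 0. level_time z \<le> S"
    by (rule eventually_mono) (rule below)
qed

lemma phase_profile_of_solution: "phase_profile (\<lambda>z. - V' (level_time z))"
  unfolding phase_profile_def
proof (intro conjI allI impI)
  fix z :: real
  assume "z > 0"
  define p where "p = - V' (level_time z)"
  show "0 < - V' (level_time z)"
    using V'_neg by simp
  have "((\<lambda>z. - V' (level_time z)) has_real_derivative
      - (V'' (level_time z) * inverse (- V' (level_time z)))) (at z)"
    by (intro DERIV_minus DERIV_chain2[OF V'_deriv level_time_deriv[OF \<open>z > 0\<close>]])
  moreover have "V'' (level_time z) = - 3 * p - r z"
    using ode[of "level_time z"] V_level_time[OF \<open>z > 0\<close>] unfolding p_def r_def by simp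
  then have "- (V'' (level_time z) * inverse p) = 3 + r z / p"
    using V'_neg[of "level_time z"] unfolding p_def by (simp add: divide_simps)
  ultimately show "((\<lambda>z. - V' (level_time z)) has_real_derivative 3 + r z / - V' (level_time z)) (at z)"
    unfolding p_def by simp
next
  have "((\<lambda>z. - V' (level_time z)) \<longlongrightarrow> - 0) (at_right 0)"
    by (intro tendsto_minus filterlim_compose[OF V'_at_bot level_time_at_right_0])
  then show "((\<lambda>z. - V' (level_time z)) \<longlongrightarrow> 0) (at_right 0)"
    by simp
qed

end

lemma bvp_solution_translate:
  assumes "bvp_solution V V' V''" and "bvp_solution W W' W''"
  shows "\<exists>s0. \<forall>s. V s = W (s + s0)"
proof -
  interpret v: bvp_solution V V' V'' by fact
  interpret w: bvp_solution W W' W'' by fact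
  have "((\<lambda>z. w.level_time z - v.level_time z) has_real_derivative 0) (at z)" if "z > 0" for z
    using DERIV_diff[OF w.level_time_deriv[OF that] v.level_time_deriv[OF that]]
      phase_profile_unique[OF v.phase_profile_of_solution w.phase_profile_of_solution that]
    by simp
  then have "\<exists>s0. \<forall>z\<in>{0<..}. w.level_time z - v.level_time z = s0"
    by (intro has_field_derivative_zero_constant) (auto intro: has_field_derivative_at_within)
  then obtain s0 where s0: "\<And>z. z > 0 \<Longrightarrow> w.level_time z - v.level_time z = s0"
    by auto
  have "V s = W (s + s0)" for s
  proof -
    define z where "z = -1 - V s"
    have "z > 0"
      using v.V_less_neg_one[of s] unfolding z_def by simp
    have "w.level_time z = s + s0"
      using s0[OF \<open>z > 0\<close>] v.level_time_depth[of s] unfolding z_def by simp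
    then show ?thesis
      using w.V_level_time[OF \<open>z > 0\<close>] unfolding z_def by simp
  qed
  then show ?thesis
    by blast
qed

section \<open>Existence of a phase profile\<close>

text \<open>In terms of the energy E = P^2 / 2 the profile equation reads E' = 3 sqrt (2 E) + r z,
  whose right-hand side is monotone in E; the bound E z \<le> 8 z^2 encodes P z \<le> 4 z.\<close>
definition energy_rhs :: "(real \<Rightarrow> real) \<Rightarrow> real \<Rightarrow> real" where
  "energy_rhs E t = 3 * sqrt (2 * E t) + r t"

definition energy_map :: "(real \<Rightarrow> real) \<Rightarrow> real \<Rightarrow> real" where
  "energy_map E y = integral {0..y} (energy_rhs E)"

definition admissible_energies :: "(real \<Rightarrow> real) set" where
  "admissible_energies = {E. mono_on {0..} E \<and> (\<forall>y\<ge>0. 0 \<le> E y \<and> E y \<le> 8 * y^2)}"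

lemma energy_rhs_integrable:
  assumes "E \<in> admissible_energies"
  shows "energy_rhs E integrable_on {0..y}"
proof -
  have "mono_on {0..y} (\<lambda>t. 3 * sqrt (2 * E t))"
  proof (rule mono_onI)
    fix a b assume "a \<in> {0..y}" "b \<in> {0..y}" "a \<le> b"
    then have "E a \<le> E b"
      using assms unfolding admissible_energies_def by (auto simp: mono_on_def)
    then show "3 * sqrt (2 * E a) \<le> 3 * sqrt (2 * E b)"
      by simp
  qed
  then have "(\<lambda>t. 3 * sqrt (2 * E t)) integrable_on {0..y}"
    by (rule integrable_on_mono_on)
  moreover have "r integrable_on {0..y}"
    using continuous_on_r by (rule integrable_continuous_real)
  ultimately show ?thesis
    unfolding energy_rhs_def by (rule integrable_add)
qed

lemma energy_rhs_nonneg: "E \<in> admissible_energies \<Longrightarrow> t \<ge> 0 \<Longrightarrow> 0 \<le> energy_rhs E t"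
  unfolding energy_rhs_def admissible_energies_def using r_nonneg[of t] by simp

lemma energy_map_mono:
  assumes "E \<in> admissible_energies" "F \<in> admissible_energies" "\<And>t. t \<ge> 0 \<Longrightarrow> E t \<le> F t"
  shows "energy_map E y \<le> energy_map F y"
  unfolding energy_map_def
proof (rule integral_le[OF energy_rhs_integrable[OF assms(1)] energy_rhs_integrable[OF assms(2)]])
  show "energy_rhs E t \<le> energy_rhs F t" if "t \<in> {0..y}" for t
    using assms(3)[of t] that unfolding energy_rhs_def by simp
qed

lemma energy_map_le_square:
  assumes "E \<in> admissible_energies" "y \<ge> 0"
  shows "energy_map E y \<le> 8 * y^2"
proof -
  have "energy_rhs E t \<le> 16 * t" if "t \<in> {0..y}" for t
  proof -
    have "2 * E t \<le> (4 * t)^2"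
      using assms(1) that unfolding admissible_energies_def by (auto simp: power2_eq_square)
    then have "sqrt (2 * E t) \<le> sqrt ((4 * t)^2)"
      by (rule real_sqrt_le_mono)
    moreover have "sqrt ((4 * t)^2) = 4 * t"
      using that by (subst real_sqrt_abs) simp
    ultimately have "sqrt (2 * E t) \<le> 4 * t"
      by linarith
    then show ?thesis
      unfolding energy_rhs_def using r_le_linear[of t] that by simp
  qed
  then have "energy_map E y \<le> integral {0..y} (\<lambda>t. 16 * t)"
    unfolding energy_map_def
    by (intro integral_le energy_rhs_integrable assms integrable_continuous_real continuous_intros)
  also have "\<dots> = 16 * integral {0..y} (\<lambda>t. t)"
    by (rule integral_mult_right)
  also have "\<dots> = 8 * y^2"
    using assms(2) by simp
  finally show ?thesis .
qed

lemma energy_map_admissible: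
  assumes "E \<in> admissible_energies"
  shows "energy_map E \<in> admissible_energies"
proof -
  have "energy_map E a \<le> energy_map E b" if "0 \<le> a" "a \<le> b" for a b
  proof -
    have "energy_map E b = energy_map E a + integral {a..b} (energy_rhs E)"
      unfolding energy_map_def using that energy_rhs_integrable[OF assms, of b]
      by (simp add: Henstock_Kurzweil_Integration.integral_combine)
    moreover have "0 \<le> integral {a..b} (energy_rhs E)"
      using that energy_rhs_nonneg[OF assms]
      by (intro integral_nonneg integrable_subinterval_real[OF energy_rhs_integrable[OF assms, of b]])
        auto
    ultimately show ?thesis
      by simp
  qed
  moreover have "0 \<le> energy_map E y" if "y \<ge> 0" for y
    unfolding energy_map_def using energy_rhs_integrable[OF assms] energy_rhs_nonneg[OF assms]
    by (intro integral_nonneg) auto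
  moreover have "mono_on {0..} (energy_map E)"
    using calculation(1) by (intro mono_onI) simp
  ultimately show ?thesis
    using energy_map_le_square[OF assms] unfolding admissible_energies_def by simp
qed

lemma admissible_energies_INF:
  assumes "S \<subseteq> admissible_energies" "S \<noteq> {}"
  shows "(\<lambda>y. INF E\<in>S. E y) \<in> admissible_energies"
proof -
  have bdd: "bdd_below ((\<lambda>E. E y) ` S)" if "y \<ge> 0" for y
    using assms(1) that unfolding admissible_energies_def by (intro bdd_belowI[of _ 0]) auto
  have "(INF E\<in>S. E a) \<le> (INF E\<in>S. E b)" if "0 \<le> a" "a \<le> b" for a b
  proof (rule cINF_mono[OF assms(2) bdd[OF that(1)]])
    fix E assume "E \<in> S"
    then have "E a \<le> E b"
      using assms(1) that unfolding admissible_energies_def by (auto simp: mono_on_def)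
    with \<open>E \<in> S\<close> show "\<exists>F\<in>S. F a \<le> E b"
      by blast
  qed
  moreover have "0 \<le> (INF E\<in>S. E y)" if "y \<ge> 0" for y
    using assms that unfolding admissible_energies_def by (intro cINF_greatest) auto
  moreover have "(INF E\<in>S. E y) \<le> 8 * y^2" if "y \<ge> 0" for y
  proof -
    obtain E where "E \<in> S"
      using assms(2) by blast
    then have "(INF E\<in>S. E y) \<le> E y"
      by (rule cINF_lower[OF bdd[OF that]])
    also have "\<dots> \<le> 8 * y^2"
      using \<open>E \<in> S\<close> assms(1) that unfolding admissible_energies_def by auto
    finally show ?thesis .
  qed
  ultimately show ?thesis
    unfolding admissible_energies_def by (auto intro!: mono_onI)
qed

text \<open>As in the Knaster-Tarski theorem, the pointwise infimum of all admissible
  supersolutions is a fixed point.\<close>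
lemma energy_map_fixpoint: "\<exists>E\<in>admissible_energies. \<forall>y\<ge>0. energy_map E y = E y"
proof -
  define S where "S = {E \<in> admissible_energies. \<forall>y\<ge>0. energy_map E y \<le> E y}"
  define E0 where "E0 y = (INF E\<in>S. E y)" for y
  have square_in_S: "(\<lambda>y. 8 * y^2) \<in> S"
  proof -
    have "(\<lambda>y. 8 * y^2) \<in> admissible_energies"
      unfolding admissible_energies_def by (auto intro!: mono_onI power_mono)
    with energy_map_le_square show ?thesis
      unfolding S_def by auto
  qed
  have "S \<subseteq> admissible_energies"
    unfolding S_def by blast
  then have E0_admissible: "E0 \<in> admissible_energies"
    unfolding E0_def using admissible_energies_INF square_in_S by blast
  have E0_le: "E0 y \<le> E y" if "E \<in> S" "y \<ge> 0" for E y
    unfolding E0_def using that \<open>S \<subseteq> admissible_energies\<close>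
    by (intro cINF_lower bdd_belowI[of _ 0]) (auto simp: admissible_energies_def)
  have E0_super: "energy_map E0 y \<le> E0 y" if "y \<ge> 0" for y
  proof -
    have "energy_map E0 y \<le> (INF E\<in>S. E y)"
    proof (rule cINF_greatest)
      show "S \<noteq> {}"
        using square_in_S by blast
      fix E assume "E \<in> S"
      then have "energy_map E0 y \<le> energy_map E y"
        using E0_admissible E0_le unfolding S_def by (intro energy_map_mono) auto
      also have "\<dots> \<le> E y"
        using \<open>E \<in> S\<close> that unfolding S_def by simp
      finally show "energy_map E0 y \<le> E y" .
    qed
    then show ?thesis
      by (simp only: E0_def)
  qed
  have "energy_map E0 \<in> S"
    using energy_map_admissible[OF E0_admissible] E0_admissible E0_super
    unfolding S_def by (auto intro!: energy_map_mono)
  then have "E0 y \<le> energy_map E0 y" if "y \<ge> 0" for y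
    using E0_le that by blast
  with E0_super E0_admissible show ?thesis
    by (intro bexI[of _ E0]) (auto intro: antisym)
qed

lemma energy_fixpoint_continuous_on:
  assumes E: "E \<in> admissible_energies" and fixed: "\<And>y. y \<ge> 0 \<Longrightarrow> energy_map E y = E y"
  shows "continuous_on {0..b} E"
  using indefinite_integral_continuous_1[OF energy_rhs_integrable[OF E]] fixed
  unfolding energy_map_def by (rule continuous_on_eq) auto

lemma energy_fixpoint_has_derivative:
  assumes E: "E \<in> admissible_energies" and fixed: "\<And>y. y \<ge> 0 \<Longrightarrow> energy_map E y = E y"
    and "y > 0"
  shows "(E has_real_derivative energy_rhs E y) (at y)"
proof -
  have "continuous_on {0..b} (energy_rhs E)" for b
    unfolding energy_rhs_def
    by (intro continuous_intros continuous_on_r energy_fixpoint_continuous_on[OF E fixed]) auto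
  then have "(energy_map E has_real_derivative energy_rhs E y) (at y within {0..y + 1})"
    unfolding energy_map_def using \<open>y > 0\<close> by (intro integral_has_real_derivative) auto
  moreover have "at y within {0..y + 1} = at y"
    using \<open>y > 0\<close> by (intro at_within_interior) auto
  ultimately have "(energy_map E has_real_derivative energy_rhs E y) (at y)"
    by simp
  then show ?thesis
    by (rule has_field_derivative_transform_within_open[where S="{0<..}"]) (use \<open>y > 0\<close> fixed in auto)
qed

lemma phase_profile_of_energy_fixpoint:
  assumes E: "E \<in> admissible_energies" and fixed: "\<And>y. y \<ge> 0 \<Longrightarrow> energy_map E y = E y"
  shows "phase_profile (\<lambda>y. sqrt (2 * E y))" and "\<And>y. y \<ge> 0 \<Longrightarrow> sqrt (2 * E y) \<le> 4 * y"
proof -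
  have E_nonneg: "0 \<le> E y" and E_le: "E y \<le> 8 * y^2" if "y \<ge> 0" for y
    using E that unfolding admissible_energies_def by auto
  show P_le: "sqrt (2 * E y) \<le> 4 * y" if "y \<ge> 0" for y
  proof -
    have "sqrt (2 * E y) \<le> sqrt ((4 * y)^2)"
      using E_le[OF that] by (intro real_sqrt_le_mono) (simp add: power2_eq_square)
    also have "\<dots> = 4 * y"
      using that by (subst real_sqrt_abs) simp
    finally show ?thesis .
  qed
  have E_pos: "0 < E y" if "y > 0" for y
  proof -
    have "E 0 < E y"
    proof (rule DERIV_pos_imp_increasing_open[OF that])
      fix x :: real assume "0 < x" "x < y"
      then have "0 < energy_rhs E x"
        unfolding energy_rhs_def using E_nonneg[of x] r_pos[of x] by (simp add: add_nonneg_pos)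
      then show "\<exists>d. (E has_real_derivative d) (at x) \<and> 0 < d"
        using energy_fixpoint_has_derivative[OF E fixed \<open>0 < x\<close>] by blast
    qed (rule energy_fixpoint_continuous_on[OF E fixed])
    then show ?thesis
      using fixed[of 0] unfolding energy_map_def by simp
  qed
  show "phase_profile (\<lambda>y. sqrt (2 * E y))"
    unfolding phase_profile_def
  proof (intro conjI allI impI)
    fix z :: real
    assume "z > 0"
    show "0 < sqrt (2 * E z)"
      using E_pos[OF \<open>z > 0\<close>] by simp
    have "((\<lambda>y. sqrt (2 * E y)) has_real_derivative
        inverse (sqrt (2 * E z)) / 2 * (2 * energy_rhs E z)) (at z)"
      using E_pos[OF \<open>z > 0\<close>]
      by (intro DERIV_chain2[OF DERIV_real_sqrt] DERIV_cmult energy_fixpoint_has_derivative E fixed \<open>z > 0\<close>)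
        simp
    moreover have "inverse (sqrt (2 * E z)) / 2 * (2 * energy_rhs E z) = 3 + r z / sqrt (2 * E z)"
      using E_pos[OF \<open>z > 0\<close>] unfolding energy_rhs_def by (simp add: divide_simps)
    ultimately show "((\<lambda>y. sqrt (2 * E y)) has_real_derivative 3 + r z / sqrt (2 * E z)) (at z)"
      by simp
  next
    have pos: "\<forall>\<^sub>F y in at_right 0. 0 < (y::real)"
      by (rule eventually_at_right_less)
    have "\<forall>\<^sub>F y in at_right 0. 0 \<le> sqrt (2 * E y)"
      using pos by eventually_elim (simp add: E_nonneg)
    moreover have "\<forall>\<^sub>F y in at_right 0. sqrt (2 * E y) \<le> 4 * y"
      using pos by eventually_elim (simp add: P_le)
    moreover have "((\<lambda>y::real. 4 * y) \<longlongrightarrow> 4 * 0) (at_right 0)"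
      by (intro tendsto_intros)
    ultimately show "((\<lambda>y. sqrt (2 * E y)) \<longlongrightarrow> 0) (at_right 0)"
      using tendsto_sandwich[OF _ _ tendsto_const] by fastforce
  qed
qed

section \<open>From a phase profile to a solution\<close>

lemma right_inverse_limits:
  fixes \<sigma> ys :: "real \<Rightarrow> real"
  assumes mono: "\<And>a b. 0 < a \<Longrightarrow> a < b \<Longrightarrow> \<sigma> a < \<sigma> b"
    and inverse: "\<And>s. 0 < ys s \<and> \<sigma> (ys s) = s"
  shows "(ys \<longlongrightarrow> 0) at_bot" and "filterlim ys at_top at_top"
proof -
  have below: "ys s \<le> y" if "0 < y" "s \<le> \<sigma> y" for s y
    using mono[of y "ys s"] inverse[of s] that by fastforce
  have above: "y \<le> ys s" if "0 < y" "\<sigma> y \<le> s" for s y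
    using mono[of "ys s" y] inverse[of s] that by fastforce
  show "(ys \<longlongrightarrow> 0) at_bot"
  proof (rule tendstoI)
    fix e :: real assume "e > 0"
    then have "dist (ys s) 0 < e" if "s \<le> \<sigma> (e / 2)" for s
      using below[of "e / 2" s] inverse[of s] that by simp
    then show "\<forall>\<^sub>F s in at_bot. dist (ys s) 0 < e"
      unfolding eventually_at_bot_linorder by blast
  qed
  show "filterlim ys at_top at_top"
    unfolding filterlim_at_top
  proof
    fix Z :: real
    have "Z \<le> ys s" if "\<sigma> (max 1 Z) \<le> s" for s
      using above[of "max 1 Z" s] that by simp
    then show "\<forall>\<^sub>F s in at_top. Z \<le> ys s"
      unfolding eventually_at_top_linorder by blast
  qed
qed

text \<open>With P z \<le> 4 z the travel time \<sigma> z = \<integral> dz / P grows at least like (ln z) / 4 in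
  both directions, so it takes every real value.\<close>
lemma phase_time_surj:
  assumes P: "phase_profile P" and P_le: "\<And>y. y > 0 \<Longrightarrow> P y \<le> 4 * y"
    and \<sigma>: "\<And>y. y > 0 \<Longrightarrow> (\<sigma> has_real_derivative 1 / P y) (at y)"
  shows "\<exists>y>0. \<sigma> y = s"
proof -
  have P_pos: "0 < P y" if "y > 0" for y
    using P that unfolding phase_profile_def by blast
  have slow: "4 * \<sigma> a - ln a \<le> 4 * \<sigma> b - ln b" if "0 < a" "a \<le> b" for a b
  proof (rule DERIV_nonneg_imp_nondecreasing[of a b "\<lambda>y. 4 * \<sigma> y - ln y", OF that(2)])
    fix x assume "a \<le> x" "x \<le> b"
    with that have "x > 0" by simp
    have "1 / (4 * x) \<le> 1 / P x"
      using P_le[OF \<open>x > 0\<close>] P_pos[OF \<open>x > 0\<close>] by (intro divide_left_mono) auto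
    moreover have "((\<lambda>y. 4 * \<sigma> y - ln y) has_real_derivative 4 * (1 / P x) - 1 / x) (at x)"
      using \<open>x > 0\<close> by (auto intro!: derivative_eq_intros \<sigma> simp: inverse_eq_divide)
    ultimately show "\<exists>y. ((\<lambda>y. 4 * \<sigma> y - ln y) has_real_derivative y) (at x) \<and> 0 \<le> y"
      using \<open>x > 0\<close> by (intro exI[of _ "4 * (1 / P x) - 1 / x"]) (simp add: field_simps)
  qed
  define a where "a = exp (min 0 (4 * (s - \<sigma> 1)))"
  define b where "b = exp (max 0 (4 * (s - \<sigma> 1)))"
  have "0 < a" "a \<le> 1" "1 \<le> b"
    unfolding a_def b_def by auto
  have "\<sigma> a \<le> s"
    using slow[OF \<open>0 < a\<close> \<open>a \<le> 1\<close>] unfolding a_def by (simp add: min_def split: if_splits)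
  moreover have "s \<le> \<sigma> b"
    using slow[OF _ \<open>1 \<le> b\<close>] unfolding b_def by (simp add: max_def split: if_splits)
  moreover have "continuous_on {a..b} \<sigma>"
    using \<open>0 < a\<close> by (intro continuous_at_imp_continuous_on ballI DERIV_isCont[OF \<sigma>]) auto
  ultimately obtain y where "a \<le> y" "\<sigma> y = s"
    using IVT'[of \<sigma> a s b] \<open>a \<le> 1\<close> \<open>1 \<le> b\<close> by auto
  with \<open>0 < a\<close> show ?thesis
    by (intro exI[of _ y]) simp
qed

lemma bvp_solution_of_phase_profile:
  assumes P: "phase_profile P" and P_le: "\<And>y. y > 0 \<Longrightarrow> P y \<le> 4 * y"
  shows "\<exists>V. is_bvp_solution V"
proof -
  have P_pos: "0 < P y" and P_deriv: "(P has_real_derivative 3 + r y / P y) (at y)" if "y > 0" for y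
    using P that unfolding phase_profile_def by auto
  have "isCont (\<lambda>y. 1 / P y) y" if "y > 0" for y
    using P_pos[OF that] by (intro continuous_intros DERIV_isCont[OF P_deriv[OF that]]) simp
  then obtain \<sigma> where "\<forall>y. 0 < y \<longrightarrow> (\<sigma> has_vector_derivative 1 / P y) (at y)"
    using einterval_antiderivative[of 0 \<infinity> "\<lambda>y. 1 / P y"] by auto
  then have \<sigma>: "(\<sigma> has_real_derivative 1 / P y) (at y)" if "y > 0" for y
    using that by (simp add: has_real_derivative_iff_has_vector_derivative)
  have \<sigma>_mono: "\<sigma> a < \<sigma> b" if "0 < a" "a < b" for a b
  proof (rule DERIV_pos_imp_increasing[OF that(2)])
    fix x assume "a \<le> x"
    with that have "x > 0" by simp
    then show "\<exists>y. (\<sigma> has_real_derivative y) (at x) \<and> 0 < y"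
      using \<sigma> P_pos by (intro exI[of _ "1 / P x"]) simp
  qed
  have "inj_on \<sigma> {0<..}"
  proof (rule inj_onI)
    fix x y :: real assume "x \<in> {0<..}" "y \<in> {0<..}" "\<sigma> x = \<sigma> y"
    then show "x = y"
      using \<sigma>_mono[of x y] \<sigma>_mono[of y x] by (cases x y rule: linorder_cases) auto
  qed
  define ys where "ys = inv_into {0<..} \<sigma>"
  have ys: "0 < ys s \<and> \<sigma> (ys s) = s" for s
  proof -
    obtain y where "y > 0" "\<sigma> y = s"
      using phase_time_surj[OF P P_le \<sigma>] by blast
    then have "s \<in> \<sigma> ` {0<..}"
      by blast
    then have "ys s \<in> {0<..}" "\<sigma> (ys s) = s"
      unfolding ys_def by (rule inv_into_into, rule f_inv_into_f)
    then show ?thesis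
      by simp
  qed
  have ys_deriv: "(ys has_real_derivative P (ys s)) (at s)" for s
  proof -
    have "(ys has_real_derivative inverse (1 / P (ys s))) (at s)"
    proof (rule has_field_derivative_inverse_strong_x[where S="{0<..}" and f=\<sigma>])
      show "continuous_on {0<..} \<sigma>"
        by (intro continuous_at_imp_continuous_on ballI DERIV_isCont[OF \<sigma>]) simp
      show "(\<sigma> has_real_derivative 1 / P (ys s)) (at (ys s))" "1 / P (ys s) \<noteq> 0"
        using ys[of s] \<sigma> P_pos[of "ys s"] by auto
      show "ys (\<sigma> y) = y" if "y \<in> {0<..}" for y
        unfolding ys_def using \<open>inj_on \<sigma> {0<..}\<close> that by (rule inv_into_f_f)
    qed (use ys in auto)
    then show ?thesis
      by simp
  qed
  define V V' V'' where "V s = -1 - ys s" and "V' s = - P (ys s)"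
    and "V'' s = - (3 * P (ys s) + r (ys s))" for s
  have "(V has_real_derivative V' s) (at s)" for s
    unfolding V_def V'_def by (auto intro!: derivative_eq_intros ys_deriv)
  moreover have "(V' has_real_derivative V'' s) (at s)" for s
  proof -
    have "(V' has_real_derivative - ((3 + r (ys s) / P (ys s)) * P (ys s))) (at s)"
      unfolding V'_def using ys by (intro DERIV_minus DERIV_chain2[OF P_deriv ys_deriv]) simp
    moreover have "(3 + r (ys s) / P (ys s)) * P (ys s) = 3 * P (ys s) + r (ys s)"
      using P_pos[of "ys s"] ys[of s] by (simp add: distrib_right)
    ultimately show ?thesis
      unfolding V''_def by simp
  qed
  moreover have "V'' s - 3 * V' s = R (V s)" for s
    unfolding V_def V'_def V''_def r_def by simp
  moreover have "(ys \<longlongrightarrow> 0) at_bot" and ys_top: "filterlim ys at_top at_top"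
    using right_inverse_limits[OF \<sigma>_mono ys] by auto
  then have "(V \<longlongrightarrow> -1) at_bot"
    unfolding V_def using tendsto_diff[OF tendsto_const, of ys 0 at_bot "-1"] by simp
  moreover have "filterlim (\<lambda>s. 1 + ys s) at_top at_top"
    by (rule filterlim_tendsto_add_at_top[OF tendsto_const ys_top])
  then have "filterlim V at_bot at_top"
    unfolding filterlim_uminus_at_bot V_def by (simp add: add.commute)
  ultimately have "is_bvp_solution V"
    unfolding is_bvp_solution_def by blast
  then show ?thesis
    by blast
qed

lemma phase_profile_exists: "\<exists>P. phase_profile P \<and> (\<forall>y>0. P y \<le> 4 * y)"
proof -
  obtain E where "E \<in> admissible_energies" "\<And>y. y \<ge> 0 \<Longrightarrow> energy_map E y = E y"
    using energy_map_fixpoint by blast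
  from phase_profile_of_energy_fixpoint[OF this] show ?thesis
    by auto
qed

lemma is_bvp_solution_iff: "is_bvp_solution V \<longleftrightarrow> (\<exists>V' V''. bvp_solution V V' V'')"
  unfolding is_bvp_solution_def bvp_solution_def by blast

theorem lemma4p6:
  shows "(\<exists>V. is_bvp_solution V) \<and>
         (\<forall>V1 V2. is_bvp_solution V1 \<longrightarrow> is_bvp_solution V2 \<longrightarrow>
            (\<exists>s0::real. \<forall>s. V1 s = V2 (s + s0)))"
proof (intro conjI allI impI)
  show "\<exists>V. is_bvp_solution V"
    using phase_profile_exists bvp_solution_of_phase_profile by blast
  fix V1 V2
  assume "is_bvp_solution V1" "is_bvp_solution V2"
  then show "\<exists>s0. \<forall>s. V1 s = V2 (s + s0)"
    unfolding is_bvp_solution_iff using bvp_solution_translate by blast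
qed
end
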